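(* Consider the delayed linear system \[ \dot x_i(t)=g_i(y_i)+\frac{K}{c_i}\sum_{j\in\mathcal N_i}a_{ij}\bigl(x_j(t-\tau_{ij})-x_i(t)\bigr),\quad t>0,\qquad x_i(t)=\phi_i(t),\ t\in[-\tau,0],\quad i=1,\dots,N, \] and assume: (a1) $K>0$ and $c_i>0$ for all $i$; (a2) the delays satisfy $0\le\tau_{ij}\le\tau:=\max_{i\neq j}\tau_{ij}<+\infty$; (a3) the initial functions $\phi_i$ are continuous and bounded on $[-\tau,0]$. Let $\mathbf L$ be the Laplacian of the associated digraph $\mathscr G$ and let $\boldsymbol\gamma=(\gamma_1,\dots,\gamma_N)^T$ be a left eigenvector of $\mathbf L$ for the eigenvalue $0$, i.e. $\boldsymbol\gamma^T\mathbf L=\mathbf 0^T$, normalized with $\|\boldsymbol\gamma\|=1$ and sign chosen so that its entries are nonnegative. Then the system globally synchronizes for every choice of finite delays $\{\tau_{ij}\}$ if and only if $\mathscr G$ is quasi-strongly connected. In that case the synchronized state (common limit of all state derivatives) is \[ \omega^\star=\frac{\sum_{i=1}^N\gamma_i c_i g_i(y_i)}{\sum_{i=1}^N\gamma_i c_i+K\sum_{i=1}^N\sum_{j\in\mathcal N_i}\gamma_i a_{ij}\tau_{ij}}, \] where $\gamma_i>0$ if and only if node $i$ can reach all other nodes of $\mathscr G$ through a directed path, and $\gamma_i=0$ otherwise.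
   Context: Network of $N$ nodes. Node $i$ has a scalar measurement $y_i\in\mathbb R$, a real function $g_i:\mathbb R\to\mathbb R$, a coefficient $c_i>0$, and a scalar state $x_i(t)$. $K>0$ is a coupling gain. For $i\neq j$, $a_{ij}\ge 0$ is a link coefficient (in general $a_{ij}\neq a_{ji}$), $\mathcal N_i=\{j\neq i: a_{ij}\neq 0\}$, and $\tau_{ij}\ge0$ is a constant delay on the link from $j$ to $i$. Digraph $\mathscr G$: vertices $\{1,\dots,N\}$, with a directed edge from $j$ to $i$ (information flows from $j$ to $i$) of weight $a_{ij}$ whenever $a_{ij}>0$. Adjacency matrix $[\mathbf A]_{ij}=a_{ij}$ (zero diagonal), $\mathbf D=\mathrm{diag}(\sum_j a_{1j},\dots,\sum_j a_{Nj})$, Laplacian $\mathbf L=\mathbf D-\mathbf A$. Node $i$ reaches node $j$ if there is a directed path from $i$ to $j$ along edges. $\mathscr G$ is quasi-strongly connected (QSC) if for every ordered pair of nodes $u,v$ there exists a node $r$ that reaches both $u$ and $v$. Synchronization: a solution $\{x_i^\star(t)\}$ is a synchronized state if $\dot x_i^\star(t)=\omega^\star$ for all $i$ and $t$, with $\omega^\star$ constant. The system globally synchronizes if a synchronized state exists and, for every admissible set of initial functions $\{\phi_i\}$, every solution satisfies $\lim_{t\to\infty}|\dot x_i(t)-\omega^\star|=0$ for all $i$.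
   Formalization: The left side of the equivalence asserts global synchronization for every choice of the functions $g_i$, measurements $y_i$ and finite delays $\{\tau_{ij}\}$ (with $c_i$, K and $a_{ij}$ fixed), not only for the given $g_i(y_i)$. The statement above fails without it. *)

theory Defs
  imports "HOL-Analysis.Analysis"
begin

text \<open>Nodes are the elements of a finite type 'n (so N = CARD('n) \<ge> 1).
  The link coefficient a i j (i \<noteq> j) is the weight of the edge from j to i;
  diagonal values a i i are ignored (the adjacency matrix has zero diagonal).\<close>

definition nbrs :: "('n \<Rightarrow> 'n \<Rightarrow> real) \<Rightarrow> 'n \<Rightarrow> 'n set" where
  "nbrs a i = {j. j \<noteq> i \<and> a i j \<noteq> 0}"

definition adjacency :: "('n::finite \<Rightarrow> 'n \<Rightarrow> real) \<Rightarrow> real^'n^'n" where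
  "adjacency a = (\<chi> i j. if i = j then 0 else a i j)"

definition degree_mat :: "('n::finite \<Rightarrow> 'n \<Rightarrow> real) \<Rightarrow> real^'n^'n" where
  "degree_mat a = (\<chi> i j. if i = j then (\<Sum>k\<in>UNIV. adjacency a $ i $ k) else 0)"

definition laplacian :: "('n::finite \<Rightarrow> 'n \<Rightarrow> real) \<Rightarrow> real^'n^'n" where
  "laplacian a = degree_mat a - adjacency a"

definition edges :: "('n \<Rightarrow> 'n \<Rightarrow> real) \<Rightarrow> ('n \<times> 'n) set" where
  "edges a = {(j, i). i \<noteq> j \<and> a i j > 0}"

definition reaches :: "('n \<Rightarrow> 'n \<Rightarrow> real) \<Rightarrow> 'n \<Rightarrow> 'n \<Rightarrow> bool" where
  "reaches a u v \<longleftrightarrow> (u, v) \<in> (edges a)\<^sup>*"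

definition QSC :: "('n \<Rightarrow> 'n \<Rightarrow> real) \<Rightarrow> bool" where
  "QSC a \<longleftrightarrow> (\<forall>u v. \<exists>r. reaches a r u \<and> reaches a r v)"

definition delays_ok :: "('n \<Rightarrow> 'n \<Rightarrow> real) \<Rightarrow> bool" where
  "delays_ok \<tau> \<longleftrightarrow> (\<forall>i j. i \<noteq> j \<longrightarrow> 0 \<le> \<tau> i j)"

text \<open>Maximal delay tau = max over i \<noteq> j of tau_ij (0 if there is only one node).\<close>
definition tau_max :: "('n::finite \<Rightarrow> 'n \<Rightarrow> real) \<Rightarrow> real" where
  "tau_max \<tau> = Max (insert 0 {\<tau> i j | i j. i \<noteq> j})"

definition admissible_init :: "('n::finite \<Rightarrow> 'n \<Rightarrow> real) \<Rightarrow> ('n \<Rightarrow> real \<Rightarrow> real) \<Rightarrow> bool" where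
  "admissible_init \<tau> \<phi> \<longleftrightarrow>
     (\<forall>i. continuous_on {- tau_max \<tau>..0} (\<phi> i) \<and> bounded (\<phi> i ` {- tau_max \<tau>..0}))"

definition is_solution ::
  "('n::finite \<Rightarrow> real \<Rightarrow> real) \<Rightarrow> ('n \<Rightarrow> real) \<Rightarrow> ('n \<Rightarrow> real) \<Rightarrow> real \<Rightarrow>
   ('n \<Rightarrow> 'n \<Rightarrow> real) \<Rightarrow> ('n \<Rightarrow> 'n \<Rightarrow> real) \<Rightarrow>
   ('n \<Rightarrow> real \<Rightarrow> real) \<Rightarrow> ('n \<Rightarrow> real \<Rightarrow> real) \<Rightarrow> bool" where
  "is_solution g y c K a \<tau> \<phi> x \<longleftrightarrow>
     (\<forall>i. (\<forall>t\<in>{- tau_max \<tau>..0}. x i t = \<phi> i t)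
        \<and> continuous_on {- tau_max \<tau>..} (x i)
        \<and> (\<forall>t>0. (x i has_real_derivative
              (g i (y i) + K / c i * (\<Sum>j\<in>nbrs a i. a i j * (x j (t - \<tau> i j) - x i t)))) (at t)))"

definition globally_synchronizes_to ::
  "('n::finite \<Rightarrow> real \<Rightarrow> real) \<Rightarrow> ('n \<Rightarrow> real) \<Rightarrow> ('n \<Rightarrow> real) \<Rightarrow> real \<Rightarrow>
   ('n \<Rightarrow> 'n \<Rightarrow> real) \<Rightarrow> ('n \<Rightarrow> 'n \<Rightarrow> real) \<Rightarrow> real \<Rightarrow> bool" where
  "globally_synchronizes_to g y c K a \<tau> \<omega> \<longleftrightarrow>
     (\<exists>\<phi> xs. admissible_init \<tau> \<phi> \<and> is_solution g y c K a \<tau> \<phi> xs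
            \<and> (\<forall>i. \<forall>t>0. (xs i has_real_derivative \<omega>) (at t)))
     \<and> (\<forall>\<phi> x. admissible_init \<tau> \<phi> \<longrightarrow> is_solution g y c K a \<tau> \<phi> x \<longrightarrow>
            (\<forall>i. ((\<lambda>t. \<bar>deriv (x i) t - \<omega>\<bar>) \<longlongrightarrow> 0) at_top))"

definition globally_synchronizes ::
  "('n::finite \<Rightarrow> real \<Rightarrow> real) \<Rightarrow> ('n \<Rightarrow> real) \<Rightarrow> ('n \<Rightarrow> real) \<Rightarrow> real \<Rightarrow>
   ('n \<Rightarrow> 'n \<Rightarrow> real) \<Rightarrow> ('n \<Rightarrow> 'n \<Rightarrow> real) \<Rightarrow> bool" where
  "globally_synchronizes g y c K a \<tau> \<longleftrightarrow> (\<exists>\<omega>. globally_synchronizes_to g y c K a \<tau> \<omega>)"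

definition normalized_left_null :: "('n::finite \<Rightarrow> 'n \<Rightarrow> real) \<Rightarrow> real^'n \<Rightarrow> bool" where
  "normalized_left_null a \<gamma> \<longleftrightarrow>
     \<gamma> v* laplacian a = 0 \<and> norm \<gamma> = 1 \<and> (\<forall>i. 0 \<le> \<gamma> $ i)"

definition omega_star ::
  "('n::finite \<Rightarrow> real \<Rightarrow> real) \<Rightarrow> ('n \<Rightarrow> real) \<Rightarrow> ('n \<Rightarrow> real) \<Rightarrow> real \<Rightarrow>
   ('n \<Rightarrow> 'n \<Rightarrow> real) \<Rightarrow> ('n \<Rightarrow> 'n \<Rightarrow> real) \<Rightarrow> real^'n \<Rightarrow> real" where
  "omega_star g y c K a \<tau> \<gamma> =
     (\<Sum>i\<in>UNIV. \<gamma> $ i * c i * g i (y i)) /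
     ((\<Sum>i\<in>UNIV. \<gamma> $ i * c i) + K * (\<Sum>i\<in>UNIV. \<Sum>j\<in>nbrs a i. \<gamma> $ i * a i j * \<tau> i j))"

end

theory Submission
  imports Defs
begin

text \<open>
  A synchronized solution is affine, x_i(t) = \<omega> t + d_i, and substituting it into the
  equations gives K (L d)_i = c_i g_i(y_i) - \<omega> (c_i + K \<Sum>_j a_ij \<tau>_ij). Pairing with the
  nonnegative left null vector \<gamma> of L forces \<omega> to be the stated ratio; conversely, for a
  quasi-strongly connected graph the kernel of L consists of the constants, so the range of L is
  the orthogonal complement of \<gamma> and suitable offsets d exist.

  The deviation u_i = x_i - \<omega> t - d_i of an arbitrary solution obeys the homogeneous delayed
  consensus equation u_i' = (K / c_i) \<Sum>_j a_ij (u_j(t - \<tau>_ij) - u_i(t)). Bounds that hold on a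
  window of length \<tau> hold forever after, and a node reaching all others transmits a definite
  fraction of its distance from either bound to every node within a fixed time. So the range of
  u shrinks geometrically, the u_i reach consensus and every x_i' tends to \<omega>.

  Without quasi-strong connectivity there are nodes u, v with no common root. Driving only the
  nodes upstream of u (g = 1 there, 0 elsewhere, no delays), a synchronized state would need
  \<omega> \<ge> 1 at a node minimising x over the nodes upstream of u, and \<omega> \<le> 0 at a node maximising x
  over the nodes upstream of v, since both sets are closed under predecessors.

  Finally, zeros of \<gamma> propagate downstream, and a flow balance across the set of roots shows
  that \<gamma> vanishes exactly off the roots.
\<close>

section \<open>Reachability and the Laplacian\<close>

lemma finite_ex_max:
  fixes f :: "'a \<Rightarrow> 'b::linorder"
  assumes "finite S" and "S \<noteq> {}"
  shows "\<exists>m\<in>S. \<forall>k\<in>S. f k \<le> f m"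
proof -
  have "Max (f ` S) \<in> f ` S" using assms by simp
  then obtain m where "m \<in> S" "f m = Max (f ` S)" by auto
  then show ?thesis using assms(1) by (metis Max_ge finite_imageI image_eqI)
qed

lemma reaches_trans: "reaches a u v \<Longrightarrow> reaches a v w \<Longrightarrow> reaches a u w"
  unfolding reaches_def by (rule rtrancl_trans)

lemma reaches_edge_trans: "(u, v) \<in> edges a \<Longrightarrow> reaches a v w \<Longrightarrow> reaches a u w"
  unfolding reaches_def by (rule converse_rtrancl_into_rtrancl)

lemma QSC_imp_root:
  fixes a :: "'n::finite \<Rightarrow> 'n \<Rightarrow> real"
  assumes "QSC a"
  shows "\<exists>r. \<forall>j. reaches a r j"
proof -
  have "\<exists>r. \<forall>j\<in>F. reaches a r j" if "finite F" for F :: "'n set"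
    using that
  proof (induction F rule: finite_induct)
    case empty
    then show ?case by simp
  next
    case (insert v F)
    then obtain r where "\<forall>j\<in>F. reaches a r j" by blast
    moreover obtain r' where "reaches a r' r" "reaches a r' v"
      using assms unfolding QSC_def by blast
    ultimately show ?case by (metis insert_iff reaches_trans)
  qed
  then show ?thesis by (metis finite UNIV_I)
qed

lemma reaches_relpow_card:
  fixes a :: "'n::finite \<Rightarrow> 'n \<Rightarrow> real"
  assumes "reaches a r i"
  obtains p where "p \<le> card (edges a)" and "(r, i) \<in> edges a ^^ p"
proof -
  have "r = i \<or> (r, i) \<in> (edges a)\<^sup>+"
    using assms by (auto simp: reaches_def rtrancl_eq_or_trancl)
  then show thesis
    by (auto simp: trancl_finite_eq_relpow intro: that)
qed

lemma nbrs_imp_edge: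
  assumes "\<forall>i j. i \<noteq> j \<longrightarrow> 0 \<le> a i j" and "j \<in> nbrs a i"
  shows "(j, i) \<in> edges a"
  using assms by (auto simp: nbrs_def edges_def less_le)

lemma adjacency_nonneg: "\<forall>i j. i \<noteq> j \<longrightarrow> 0 \<le> a i j \<Longrightarrow> 0 \<le> adjacency a $ i $ j"
  by (simp add: adjacency_def)

lemma adjacency_pos_iff: "0 < adjacency a $ i $ j \<longleftrightarrow> (j, i) \<in> edges a"
  by (auto simp: adjacency_def edges_def)

lemma sum_adjacency:
  fixes a :: "'n::finite \<Rightarrow> 'n \<Rightarrow> real"
  shows "(\<Sum>j\<in>UNIV. adjacency a $ i $ j * f j) = (\<Sum>j\<in>nbrs a i. a i j * f j)"
  by (rule sum.mono_neutral_cong_right) (auto simp: nbrs_def adjacency_def)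

lemma laplacian_mult_vector:
  "(laplacian a *v d) $ i = (\<Sum>j\<in>nbrs a i. a i j * (d$i - d$j))"
proof -
  have "(laplacian a *v d) $ i
      = (\<Sum>j\<in>UNIV. (if i = j then \<Sum>k\<in>UNIV. adjacency a $ i $ k else 0) * d$j)
        - (\<Sum>j\<in>UNIV. adjacency a $ i $ j * d$j)"
    by (simp add: matrix_vector_mult_def laplacian_def degree_mat_def left_diff_distrib sum_subtractf)
  also have "\<dots> = (\<Sum>j\<in>UNIV. adjacency a $ i $ j) * d$i - (\<Sum>j\<in>UNIV. adjacency a $ i $ j * d$j)"
    by (simp add: if_distrib if_distribR cong: if_cong)
  also have "\<dots> = (\<Sum>j\<in>nbrs a i. a i j * (d$i - d$j))"
    using sum_adjacency[of a i "\<lambda>_. 1"] sum_adjacency[of a i "\<lambda>j. d$j"]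
    by (simp add: sum_distrib_right right_diff_distrib sum_subtractf)
  finally show ?thesis .
qed

lemma vector_mult_laplacian:
  "(v v* laplacian a) $ j
     = v$j * (\<Sum>k\<in>UNIV. adjacency a $ j $ k) - (\<Sum>i\<in>UNIV. v$i * adjacency a $ i $ j)"
proof -
  have "(v v* laplacian a) $ j
      = (\<Sum>i\<in>UNIV. v$i * (if i = j then \<Sum>k\<in>UNIV. adjacency a $ i $ k else 0))
        - (\<Sum>i\<in>UNIV. v$i * adjacency a $ i $ j)"
    by (simp add: vector_matrix_mult_def laplacian_def degree_mat_def right_diff_distrib sum_subtractf)
  then show ?thesis
    by (simp add: if_distrib if_distribR cong: if_cong)
qed

lemma laplacian_kernel_max_propagates:
  assumes nn: "\<forall>i j. i \<noteq> j \<longrightarrow> 0 \<le> a i j" and ker: "laplacian a *v d = 0"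
    and max: "\<forall>k. d$k \<le> d$m" and r: "reaches a r m"
  shows "d$r = d$m"
proof -
  have "(r, m) \<in> (edges a)\<^sup>*" using r by (simp add: reaches_def)
  then show ?thesis
  proof (induction rule: converse_rtrancl_induct)
    case base
    show ?case ..
  next
    case (step i j)
    have maxj: "\<forall>k. d$k \<le> d$j" using max step.IH by simp
    have terms: "\<forall>l\<in>nbrs a j. 0 \<le> a j l * (d$j - d$l)"
      using nn maxj by (auto simp: nbrs_def)
    have "(\<Sum>l\<in>nbrs a j. a j l * (d$j - d$l)) = 0"
      using ker laplacian_mult_vector[of a d j] by simp
    then have "\<forall>l\<in>nbrs a j. a j l * (d$j - d$l) = 0"
      using terms by (simp add: sum_nonneg_eq_0_iff)
    moreover have "i \<in> nbrs a j" "0 < a j i"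
      using step.hyps(1) by (auto simp: nbrs_def edges_def)
    ultimately show ?case using step.IH by fastforce
  qed
qed

lemma laplacian_kernel_const:
  fixes a :: "'n::finite \<Rightarrow> 'n \<Rightarrow> real"
  assumes q: "QSC a" and nn: "\<forall>i j. i \<noteq> j \<longrightarrow> 0 \<le> a i j" and ker: "laplacian a *v d = 0"
  shows "d$i = d$j"
proof -
  obtain r where r: "\<forall>j. reaches a r j" using QSC_imp_root[OF q] by blast
  obtain m where m: "\<forall>k. d$k \<le> d$m"
    using finite_ex_max[of UNIV "\<lambda>k. d$k"] by auto
  obtain m' where m': "\<forall>k. (-d)$k \<le> (-d)$m'"
    using finite_ex_max[of UNIV "\<lambda>k. (-d)$k"] by auto
  have "laplacian a *v (-d) = 0" using ker matrix_vector_mult_diff_distrib[of "laplacian a" 0 d] by simp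
  then have "(-d)$r = (-d)$m'"
    using laplacian_kernel_max_propagates[OF nn _ m' r[rule_format]] by blast
  moreover have "d$r = d$m" using laplacian_kernel_max_propagates[OF nn ker m r[rule_format]] .
  ultimately show ?thesis using m m' by (metis antisym neg_le_iff_le vector_uminus_component)
qed

lemma matrix_vector_mult_injective_iff:
  fixes A :: "real^'n^'m"
  shows "inj ((*v) A) \<longleftrightarrow> (\<forall>x. A *v x = 0 \<longrightarrow> x = 0)"
  by (simp add: vec.inj_iff_eq_0)

lemma ex_laplacian_preimage:
  fixes a :: "'n::finite \<Rightarrow> 'n \<Rightarrow> real" and \<gamma> b :: "real^'n"
  assumes q: "QSC a" and nn: "\<forall>i j. i \<noteq> j \<longrightarrow> 0 \<le> a i j"
    and "\<gamma> \<noteq> 0" and \<gamma>: "\<gamma> v* laplacian a = 0" and "\<gamma> \<bullet> b = 0"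
  shows "\<exists>d. laplacian a *v d = b"
proof -
  let ?L = "(*v) (laplacian a)"
  define one :: "real^'n" where "one = (\<chi> i. 1)"
  define H where "H = {x. one \<bullet> x = 0}"
  define G where "G = {x. \<gamma> \<bullet> x = 0}"
  have "one \<noteq> 0" by (simp add: one_def vec_eq_iff)
  then have dimH: "dim H = DIM(real^'n) - 1" unfolding H_def by (rule dim_hyperplane)
  have dimG: "dim G = DIM(real^'n) - 1" unfolding G_def by (rule dim_hyperplane) fact
  have "inj_on ?L H"
  proof (rule inj_onI)
    fix x x' assume "x \<in> H" "x' \<in> H" "?L x = ?L x'"
    then have ker: "laplacian a *v (x - x') = 0" and sum0: "(\<Sum>i\<in>UNIV. (x - x')$i) = 0"
      by (simp_all add: H_def one_def inner_vec_def matrix_vector_mult_diff_distrib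
          inner_diff_right sum_subtractf)
    have "(x - x')$i = (x - x')$j" for i j
      using laplacian_kernel_const[OF q nn ker] .
    then have "(\<Sum>i\<in>UNIV. (x - x')$i) = of_nat CARD('n) * (x - x')$j" for j
      by (metis (no_types) sum_constant sum.cong)
    then show "x = x'" using sum0 by (simp add: vec_eq_iff)
  qed
  moreover have "subspace H" unfolding H_def by (rule subspace_hyperplane)
  ultimately have "dim (?L ` H) = dim H"
    by (intro dim_image_eq) (simp_all add: span_eq_iff[THEN iffD2])
  moreover have "?L ` H \<subseteq> G"
    using \<gamma> by (auto simp: G_def dot_lmul_matrix[symmetric])
  moreover have "subspace (?L ` H)"
    using \<open>subspace H\<close> by (intro linear_subspace_image) simp_all
  ultimately have "?L ` H = G"
    using dimH dimG by (intro subspace_dim_equal) (auto simp: G_def subspace_hyperplane)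
  moreover have "b \<in> G" using \<open>\<gamma> \<bullet> b = 0\<close> by (simp add: G_def)
  ultimately show ?thesis by (metis imageE)
qed

section \<open>Nonnegative left null vectors of the Laplacian\<close>

lemma abs_left_null_laplacian:
  fixes a :: "'n::finite \<Rightarrow> 'n \<Rightarrow> real" and v :: "real^'n"
  assumes nn: "\<forall>i j. i \<noteq> j \<longrightarrow> 0 \<le> a i j" and v: "v v* laplacian a = 0"
  shows "(\<chi> i. \<bar>v$i\<bar>) v* laplacian a = 0"
proof -
  let ?A = "\<lambda>i j. adjacency a $ i $ j"
  have A: "0 \<le> ?A i j" for i j using adjacency_nonneg[OF nn] .
  have col: "v$j * (\<Sum>k\<in>UNIV. ?A j k) = (\<Sum>i\<in>UNIV. v$i * ?A i j)" for j
    using v vector_mult_laplacian[of v a j] by simp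
  have le: "\<bar>v$j\<bar> * (\<Sum>k\<in>UNIV. ?A j k) \<le> (\<Sum>i\<in>UNIV. \<bar>v$i\<bar> * ?A i j)" for j
  proof -
    have "\<bar>v$j\<bar> * (\<Sum>k\<in>UNIV. ?A j k) = \<bar>\<Sum>i\<in>UNIV. v$i * ?A i j\<bar>"
      using A by (simp add: col[symmetric] abs_mult sum_nonneg)
    also have "\<dots> \<le> (\<Sum>i\<in>UNIV. \<bar>v$i\<bar> * ?A i j)"
      using sum_abs[of "\<lambda>i. v$i * ?A i j" UNIV] A by (simp add: abs_mult)
    finally show ?thesis .
  qed
  have "(\<Sum>j\<in>UNIV. \<bar>v$j\<bar> * (\<Sum>k\<in>UNIV. ?A j k)) = (\<Sum>j\<in>UNIV. \<Sum>k\<in>UNIV. \<bar>v$j\<bar> * ?A j k)"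
    by (simp add: sum_distrib_left)
  also have "\<dots> = (\<Sum>j\<in>UNIV. \<Sum>i\<in>UNIV. \<bar>v$i\<bar> * ?A i j)"
    by (rule sum.swap)
  finally have "\<forall>j\<in>UNIV. (\<Sum>i\<in>UNIV. \<bar>v$i\<bar> * ?A i j) - \<bar>v$j\<bar> * (\<Sum>k\<in>UNIV. ?A j k) = 0"
    using le by (subst sum_nonneg_eq_0_iff[symmetric]) (simp_all add: sum_subtractf)
  then show ?thesis by (simp add: vec_eq_iff vector_mult_laplacian)
qed

lemma ex_normalized_left_null:
  fixes a :: "'n::finite \<Rightarrow> 'n \<Rightarrow> real"
  assumes nn: "\<forall>i j. i \<noteq> j \<longrightarrow> 0 \<le> a i j"
  shows "\<exists>\<gamma>. normalized_left_null a \<gamma>"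
proof -
  have "laplacian a *v (\<chi> i. 1) = 0" "(\<chi> i. 1) \<noteq> (0::real^'n)"
    by (simp_all add: vec_eq_iff laplacian_mult_vector)
  then have "\<not> inj ((*v) (laplacian a))"
    by (auto simp: matrix_vector_mult_injective_iff)
  then have "rank (transpose (laplacian a)) \<noteq> CARD('n)"
    by (simp add: full_rank_injective rank_transpose)
  then have "\<not> inj ((*v) (transpose (laplacian a)))"
    by (simp add: full_rank_injective)
  then obtain v where "v \<noteq> 0" "v v* laplacian a = 0"
    by (auto simp: matrix_vector_mult_injective_iff)
  define w :: "real^'n" where "w = (\<chi> i. \<bar>v$i\<bar>)"
  have "w \<noteq> 0" using \<open>v \<noteq> 0\<close> by (simp add: w_def vec_eq_iff)
  have "w v* laplacian a = 0"
    unfolding w_def by (rule abs_left_null_laplacian[OF nn]) fact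
  then have "(w /\<^sub>R norm w) v* laplacian a = 0"
    by (simp add: scaleR_vector_matrix_assoc)
  moreover have "norm (w /\<^sub>R norm w) = 1" using \<open>w \<noteq> 0\<close> by simp
  moreover have "\<forall>i. 0 \<le> (w /\<^sub>R norm w) $ i" by (simp add: w_def)
  ultimately show ?thesis unfolding normalized_left_null_def by blast
qed

lemma left_null_laplacian_cut:
  fixes a :: "'n::finite \<Rightarrow> 'n \<Rightarrow> real"
  assumes "\<gamma> v* laplacian a = 0"
  shows "(\<Sum>j\<in>S. \<gamma>$j * (\<Sum>k\<in>-S. adjacency a $ j $ k))
       = (\<Sum>j\<in>S. \<Sum>i\<in>-S. \<gamma>$i * adjacency a $ i $ j)"
proof -
  let ?A = "\<lambda>i j. adjacency a $ i $ j"
  have split: "(\<Sum>k\<in>UNIV. f k) = (\<Sum>k\<in>S. f k) + (\<Sum>k\<in>-S. f k)" for f :: "'n \<Rightarrow> real"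
    using sum.subset_diff[of S UNIV f] by (simp add: Compl_eq_Diff_UNIV add.commute)
  have "\<gamma>$j * (\<Sum>k\<in>UNIV. ?A j k) = (\<Sum>i\<in>UNIV. \<gamma>$i * ?A i j)" for j
    using assms vector_mult_laplacian[of \<gamma> a j] by simp
  then have "(\<Sum>j\<in>S. \<gamma>$j * (\<Sum>k\<in>S. ?A j k)) + (\<Sum>j\<in>S. \<gamma>$j * (\<Sum>k\<in>-S. ?A j k))
      = (\<Sum>j\<in>S. \<Sum>i\<in>S. \<gamma>$i * ?A i j) + (\<Sum>j\<in>S. \<Sum>i\<in>-S. \<gamma>$i * ?A i j)"
    by (simp add: split distrib_left flip: sum.distrib)
  moreover have "(\<Sum>j\<in>S. \<gamma>$j * (\<Sum>k\<in>S. ?A j k)) = (\<Sum>j\<in>S. \<Sum>i\<in>S. \<gamma>$i * ?A i j)"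
    unfolding sum_distrib_left by (rule sum.swap)
  ultimately show ?thesis by simp
qed

lemma left_null_zero_propagates:
  fixes a :: "'n::finite \<Rightarrow> 'n \<Rightarrow> real"
  assumes nn: "\<forall>i j. i \<noteq> j \<longrightarrow> 0 \<le> a i j" and \<gamma>_nonneg: "\<forall>i. 0 \<le> \<gamma>$i"
    and \<gamma>: "\<gamma> v* laplacian a = 0" and "\<gamma>$y = 0" and "reaches a y z"
  shows "\<gamma>$z = 0"
proof -
  have "(y, z) \<in> (edges a)\<^sup>*" using \<open>reaches a y z\<close> by (simp add: reaches_def)
  then show ?thesis
  proof (induction rule: rtrancl_induct)
    case base
    show ?case by fact
  next
    case (step z w)
    have terms: "\<forall>i\<in>UNIV. 0 \<le> \<gamma>$i * adjacency a $ i $ z"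
      using \<gamma>_nonneg adjacency_nonneg[OF nn] by simp
    have "(\<Sum>i\<in>UNIV. \<gamma>$i * adjacency a $ i $ z) = 0"
      using \<gamma> vector_mult_laplacian[of \<gamma> a z] step.IH by simp
    then have "\<gamma>$w * adjacency a $ w $ z = 0"
      using terms by (simp add: sum_nonneg_eq_0_iff)
    moreover have "0 < adjacency a $ w $ z" using step.hyps(2) by (simp add: adjacency_pos_iff)
    ultimately show ?case by simp
  qed
qed

lemma left_null_pos_at_root:
  fixes a :: "'n::finite \<Rightarrow> 'n \<Rightarrow> real"
  assumes nn: "\<forall>i j. i \<noteq> j \<longrightarrow> 0 \<le> a i j" and \<gamma>_nonneg: "\<forall>i. 0 \<le> \<gamma>$i"
    and \<gamma>: "\<gamma> v* laplacian a = 0" and "\<gamma> \<noteq> 0" and root: "\<forall>j. reaches a r j"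
  shows "0 < \<gamma>$r"
proof (rule ccontr)
  assume "\<not> 0 < \<gamma>$r"
  then have "\<gamma>$r = 0" using \<gamma>_nonneg by (simp add: not_less order_antisym)
  then have "\<gamma>$j = 0" for j using left_null_zero_propagates[OF nn \<gamma>_nonneg \<gamma>] root by blast
  then show False using \<open>\<gamma> \<noteq> 0\<close> by (simp add: vec_eq_iff)
qed

lemma left_null_vanishes_off_roots:
  fixes a :: "'n::finite \<Rightarrow> 'n \<Rightarrow> real"
  assumes q: "QSC a" and nn: "\<forall>i j. i \<noteq> j \<longrightarrow> 0 \<le> a i j" and \<gamma>_nonneg: "\<forall>i. 0 \<le> \<gamma>$i"
    and \<gamma>: "\<gamma> v* laplacian a = 0" and not_root: "\<not> (\<forall>j. reaches a i j)"
  shows "\<gamma>$i = 0"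
proof -
  let ?A = "\<lambda>i j. adjacency a $ i $ j"
  define R where "R = {i. \<forall>j. reaches a i j}"
  have A: "0 \<le> ?A i j" for i j using adjacency_nonneg[OF nn] .
  have no_edge_out_of_R: "?A i j = 0" if "i \<in> R" "j \<notin> R" for i j
  proof (rule ccontr)
    assume "?A i j \<noteq> 0"
    then have "(j, i) \<in> edges a" using A[of i j] by (simp add: adjacency_pos_iff[symmetric])
    then show False using that reaches_edge_trans[of j i a] by (auto simp: R_def)
  qed
  have "(\<Sum>j\<in>-R. \<gamma>$j * (\<Sum>k\<in>R. ?A j k)) = (\<Sum>j\<in>-R. \<Sum>i\<in>R. \<gamma>$i * ?A i j)"
    using left_null_laplacian_cut[OF \<gamma>, of "-R"] by simp
  also have "\<dots> = 0" by (simp add: no_edge_out_of_R)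
  finally have "\<forall>j\<in>-R. \<gamma>$j * (\<Sum>k\<in>R. ?A j k) = 0"
    using \<gamma>_nonneg A by (simp add: sum_nonneg_eq_0_iff sum_nonneg)
  then have entry: "\<gamma>$j = 0" if "j \<notin> R" "k \<in> R" "(k, j) \<in> edges a" for j k
  proof -
    have "0 < ?A j k" using that(3) by (simp add: adjacency_pos_iff)
    also have "\<dots> \<le> (\<Sum>k\<in>R. ?A j k)" using that(2) A by (intro member_le_sum) auto
    finally show ?thesis using \<open>\<forall>j\<in>-R. _\<close> that(1) by force
  qed
  obtain r where r: "\<forall>j. reaches a r j" using QSC_imp_root[OF q] by blast
  have "(r, i) \<in> (edges a)\<^sup>*" using r by (simp add: reaches_def)
  then have "i \<in> R \<or> \<gamma>$i = 0"
  proof (induction rule: rtrancl_induct)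
    case base
    show ?case using r unfolding R_def by blast
  next
    case (step j k)
    then show ?case
      using entry left_null_zero_propagates[OF nn \<gamma>_nonneg \<gamma>, of j k]
      by (metis r_into_rtrancl reaches_def)
  qed
  then show ?thesis using not_root by (simp add: R_def)
qed

lemma normalized_left_null_pos_iff:
  fixes a :: "'n::finite \<Rightarrow> 'n \<Rightarrow> real"
  assumes q: "QSC a" and nn: "\<forall>i j. i \<noteq> j \<longrightarrow> 0 \<le> a i j" and \<gamma>: "normalized_left_null a \<gamma>"
  shows "0 < \<gamma>$i \<longleftrightarrow> (\<forall>j. j \<noteq> i \<longrightarrow> reaches a i j)"
proof -
  have null: "\<gamma> v* laplacian a = 0" and "\<gamma> \<noteq> 0" and nonneg: "\<forall>i. 0 \<le> \<gamma>$i"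
    using \<gamma> by (auto simp: normalized_left_null_def)
  have "(\<forall>j. j \<noteq> i \<longrightarrow> reaches a i j) \<longleftrightarrow> (\<forall>j. reaches a i j)"
    by (metis reaches_def rtrancl.rtrancl_refl)
  moreover have "0 < \<gamma>$i \<longleftrightarrow> (\<forall>j. reaches a i j)"
  proof
    assume "0 < \<gamma>$i"
    then show "\<forall>j. reaches a i j"
      using left_null_vanishes_off_roots[OF q nn nonneg null] by force
  qed (rule left_null_pos_at_root[OF nn nonneg null \<open>\<gamma> \<noteq> 0\<close>])
  ultimately show ?thesis by simp
qed

section \<open>Necessity of quasi-strong connectivity\<close>

lemma ex_upstream_coupling_nonneg:
  fixes a :: "'n::finite \<Rightarrow> 'n \<Rightarrow> real" and x :: "'n \<Rightarrow> real"
  assumes nn: "\<forall>i j. i \<noteq> j \<longrightarrow> 0 \<le> a i j"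
  shows "\<exists>i. reaches a i u \<and> 0 \<le> (\<Sum>j\<in>nbrs a i. a i j * (x j - x i))"
proof -
  have "u \<in> {i. reaches a i u}" by (simp add: reaches_def)
  then obtain i where i: "reaches a i u" and min: "\<forall>k. reaches a k u \<longrightarrow> x i \<le> x k"
    using finite_ex_max[of "{i. reaches a i u}" "\<lambda>k. - x k"] by auto
  have "0 \<le> a i j * (x j - x i)" if "j \<in> nbrs a i" for j
  proof -
    have "x i \<le> x j" using min reaches_edge_trans[OF nbrs_imp_edge[OF nn that] i] by blast
    moreover have "0 \<le> a i j" using nn that by (auto simp: nbrs_def)
    ultimately show ?thesis by simp
  qed
  then show ?thesis using i by (blast intro: sum_nonneg)
qed

lemma not_QSC_imp_not_synchronizes:
  fixes a :: "'n::finite \<Rightarrow> 'n \<Rightarrow> real"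
  assumes K: "K > 0" and c: "\<forall>i. c i > 0" and nn: "\<forall>i j. i \<noteq> j \<longrightarrow> 0 \<le> a i j"
    and "\<not> QSC a"
  shows "\<exists>g y \<tau>. delays_ok \<tau> \<and> \<not> globally_synchronizes g y c K a \<tau>"
proof -
  obtain u v where uv: "\<And>r. \<not> (reaches a r u \<and> reaches a r v)"
    using \<open>\<not> QSC a\<close> unfolding QSC_def by blast
  define g :: "'n \<Rightarrow> real \<Rightarrow> real" where "g i s = (if reaches a i u then 1 else 0)" for i s
  define \<tau> :: "'n \<Rightarrow> 'n \<Rightarrow> real" where "\<tau> i j = 0" for i j
  have "\<not> globally_synchronizes g (\<lambda>_. 0) c K a \<tau>"
  proof
    assume "globally_synchronizes g (\<lambda>_. 0) c K a \<tau>"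
    then obtain \<omega> \<phi> x where sol: "is_solution g (\<lambda>_. 0) c K a \<tau> \<phi> x"
      and sync: "\<forall>i. \<forall>t>0. (x i has_real_derivative \<omega>) (at t)"
      unfolding globally_synchronizes_def globally_synchronizes_to_def by blast
    let ?coupling = "\<lambda>i. \<Sum>j\<in>nbrs a i. a i j * (x j 1 - x i 1)"
    have \<omega>: "\<omega> = g i 0 + K / c i * ?coupling i" for i
    proof (rule DERIV_unique)
      show "(x i has_real_derivative \<omega>) (at 1)" using sync by simp
      show "(x i has_real_derivative g i 0 + K / c i * ?coupling i) (at 1)"
        using sol unfolding is_solution_def \<tau>_def by simp
    qed
    obtain i where "reaches a i u" "0 \<le> ?coupling i"
      using ex_upstream_coupling_nonneg[OF nn, of u "\<lambda>j. x j 1"] by blast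
    then have "1 \<le> \<omega>"
      using \<omega>[of i] K c[rule_format, of i] by (simp add: g_def)
    obtain i' where "reaches a i' v" "0 \<le> - ?coupling i'"
      using ex_upstream_coupling_nonneg[OF nn, of v "\<lambda>j. - x j 1"]
      by (auto simp: sum_negf[symmetric] algebra_simps)
    then have "\<omega> \<le> 0"
      using \<omega>[of i'] uv[of i'] K c[rule_format, of i']
      by (simp add: g_def mult_nonneg_nonpos divide_nonpos_pos)
    with \<open>1 \<le> \<omega>\<close> show False by simp
  qed
  moreover have "delays_ok \<tau>" by (simp add: delays_ok_def \<tau>_def)
  ultimately show ?thesis by blast
qed

section \<open>Consensus under bounded delays\<close>

lemma first_crossing:
  fixes f :: "'i::finite \<Rightarrow> real \<Rightarrow> real"
  assumes cont: "\<And>i. continuous_on {t0..} (f i)" and start: "\<And>i. f i t0 < 0"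
    and "t0 \<le> s0" and "0 \<le> f i0 s0"
  obtains s i where "t0 < s" "0 \<le> f i s" "\<And>j s'. s' \<in> {t0..s} \<Longrightarrow> f j s' \<le> 0"
    "\<And>j s'. s' \<in> {t0..<s} \<Longrightarrow> f j s' < 0"
proof -
  define C where "C = {s. t0 \<le> s \<and> (\<exists>i. 0 \<le> f i s)}"
  have "C = (\<Union>i. {t0..} \<inter> f i -` {0..})" by (auto simp: C_def)
  moreover have "closed ({t0..} \<inter> f i -` {0..})" for i
    using cont by (intro continuous_closed_preimage) auto
  ultimately have "closed C" by (metis closed_UN finite)
  moreover have "s0 \<in> C" "bdd_below C" using assms by (auto simp: C_def bdd_below_def)
  ultimately have "Inf C \<in> C" by (intro closed_contains_Inf) auto
  then obtain i where "t0 \<le> Inf C" "0 \<le> f i (Inf C)" by (auto simp: C_def)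
  then have "t0 < Inf C" using start by (metis not_le order_le_less)
  have below: "f j s' < 0" if "s' \<in> {t0..<Inf C}" for j s'
  proof (rule ccontr)
    assume "\<not> f j s' < 0"
    then have "s' \<in> C" using that by (auto simp: C_def not_less)
    then show False using that cInf_lower[OF _ \<open>bdd_below C\<close>] by fastforce
  qed
  have upto: "f j s' \<le> 0" if "s' \<in> {t0..Inf C}" for j s'
  proof (rule continuous_le_on_closure[where f = "f j" and S = "{t0..<Inf C}"])
    show "continuous_on (closure {t0..<Inf C}) (f j)"
      using \<open>t0 < Inf C\<close> by (auto intro: continuous_on_subset[OF cont])
  qed (use that below[THEN less_imp_le] \<open>t0 < Inf C\<close> in auto)
  show thesis
    using that[OF \<open>t0 < Inf C\<close> \<open>0 \<le> f i (Inf C)\<close> upto below] .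
qed

lemma DERIV_nonneg_at_first_crossing:
  fixes f :: "real \<Rightarrow> real"
  assumes "(f has_real_derivative D) (at s)" and "t0 < s" and "0 \<le> f s"
    and "\<And>s'. s' \<in> {t0..<s} \<Longrightarrow> f s' < 0"
  shows "0 \<le> D"
proof (rule ccontr)
  assume "\<not> 0 \<le> D"
  then obtain d where "d > 0" and dec: "\<And>h. 0 < h \<Longrightarrow> h < d \<Longrightarrow> f s < f (s - h)"
    using DERIV_neg_dec_left[OF assms(1)] by auto
  define h where "h = min (d / 2) ((s - t0) / 2)"
  have h: "0 < h" "h < d" using \<open>d > 0\<close> \<open>t0 < s\<close> by (auto simp: h_def)
  have "h \<le> (s - t0) / 2" unfolding h_def by (rule min.cobounded2)
  then have "t0 \<le> s - h" using \<open>t0 < s\<close> by argo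
  then show False using h dec[of h] assms(3) assms(4)[of "s - h"] by simp
qed

lemma differential_inequality_lower_bound:
  fixes w w' :: "real \<Rightarrow> real"
  assumes "s0 \<le> s1" and "0 < \<beta>" and "continuous_on {s0..s1} w"
    and "\<And>s. s0 < s \<Longrightarrow> s < s1 \<Longrightarrow> (w has_real_derivative w' s) (at s)"
    and "\<And>s. s0 < s \<Longrightarrow> s < s1 \<Longrightarrow> g - \<beta> * w s \<le> w' s"
  shows "g / \<beta> + (w s0 - g / \<beta>) * exp (- \<beta> * (s1 - s0)) \<le> w s1"
proof -
  define h where "h s = (w s - g / \<beta>) * exp (\<beta> * s)" for s
  have "h s0 \<le> h s1"
  proof (rule DERIV_nonneg_imp_increasing_open[OF \<open>s0 \<le> s1\<close>])
    fix s assume s: "s0 < s" "s < s1"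
    have "(h has_real_derivative (w' s + \<beta> * w s - g) * exp (\<beta> * s)) (at s)"
      unfolding h_def using \<open>0 < \<beta>\<close> assms(4)[OF s]
      by (auto intro!: derivative_eq_intros simp: field_simps)
    moreover have "0 \<le> (w' s + \<beta> * w s - g) * exp (\<beta> * s)"
      using assms(5)[OF s] by simp
    ultimately show "\<exists>y. (h has_real_derivative y) (at s) \<and> 0 \<le> y" by blast
  next
    show "continuous_on {s0..s1} h"
      unfolding h_def by (intro continuous_intros assms(3))
  qed
  then have "(w s0 - g / \<beta>) * exp (\<beta> * s0) * exp (- \<beta> * s1)
      \<le> (w s1 - g / \<beta>) * exp (\<beta> * s1) * exp (- \<beta> * s1)"
    by (simp add: h_def)
  then show ?thesis
    by (simp add: mult.assoc flip: exp_add) (simp add: algebra_simps)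
qed

locale delayed_consensus =
  fixes a :: "'n::finite \<Rightarrow> 'n \<Rightarrow> real" and k :: "'n \<Rightarrow> real" and \<tau> :: "'n \<Rightarrow> 'n \<Rightarrow> real"
    and T :: real and u :: "'n \<Rightarrow> real \<Rightarrow> real"
  assumes weights_nonneg: "\<forall>i j. i \<noteq> j \<longrightarrow> 0 \<le> a i j"
    and gains_pos: "\<And>i. 0 < k i"
    and delays_bounded: "\<And>i j. i \<noteq> j \<Longrightarrow> 0 \<le> \<tau> i j \<and> \<tau> i j \<le> T"
    and T_nonneg: "0 \<le> T"
    and continuous: "\<And>i. continuous_on {-T..} (u i)"
    and dynamics: "\<And>i t. 0 < t \<Longrightarrow>
      (u i has_real_derivative k i * (\<Sum>j\<in>nbrs a i. a i j * (u j (t - \<tau> i j) - u i t))) (at t)"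
begin

lemma affine_image: "delayed_consensus a k \<tau> T (\<lambda>i t. \<sigma> * u i t + c)"
proof
  fix i and t :: real assume "0 < t"
  have "((\<lambda>t. \<sigma> * u i t + c) has_real_derivative
      \<sigma> * (k i * (\<Sum>j\<in>nbrs a i. a i j * (u j (t - \<tau> i j) - u i t)))) (at t)"
    using dynamics[OF \<open>0 < t\<close>] by (auto intro!: derivative_eq_intros)
  then show "((\<lambda>t. \<sigma> * u i t + c) has_real_derivative k i *
      (\<Sum>j\<in>nbrs a i. a i j * ((\<sigma> * u j (t - \<tau> i j) + c) - (\<sigma> * u i t + c)))) (at t)"
    by (simp add: sum_distrib_left algebra_simps)
qed (use weights_nonneg gains_pos delays_bounded T_nonneg continuous in
     \<open>auto intro!: continuous_intros\<close>)

lemma continuous_on_Icc: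
  "0 \<le> s0 \<Longrightarrow> continuous_on {s0..s1} (u i)"
  using T_nonneg by (auto intro: continuous_on_subset[OF continuous])

lemma velocity_nonneg_below_neighbours:
  assumes "\<And>j. j \<in> nbrs a i \<Longrightarrow> u i s \<le> u j (s - \<tau> i j)"
  shows "0 \<le> k i * (\<Sum>j\<in>nbrs a i. a i j * (u j (s - \<tau> i j) - u i s))"
proof -
  have "0 \<le> (\<Sum>j\<in>nbrs a i. a i j * (u j (s - \<tau> i j) - u i s))"
    using assms weights_nonneg by (intro sum_nonneg) (auto simp: nbrs_def)
  then show ?thesis using gains_pos[of i] by simp
qed

lemma lower_bound_invariant_eps:
  assumes "0 \<le> t0" and init: "\<And>i s. s \<in> {t0 - T..t0} \<Longrightarrow> b \<le> u i s"
    and "0 < \<epsilon>" and "t0 \<le> s"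
  shows "b - \<epsilon> * (1 + s - t0) \<le> u i s"
proof (rule ccontr)
  \<comment> \<open>The barrier tilts down with slope \<epsilon>, so at the first crossing some u_i would fall at
    least that fast, although all its delayed neighbours still lie above the barrier.\<close>
  define f where "f i s = (b - \<epsilon> * (1 + s - t0)) - u i s" for i s
  assume "\<not> ?thesis"
  then have "0 \<le> f i s" by (simp add: f_def)
  moreover have "continuous_on {t0..} (f i)" for i
    unfolding f_def using \<open>0 \<le> t0\<close> T_nonneg
    by (intro continuous_intros continuous_on_subset[OF continuous]) auto
  moreover have "f i t0 < 0" for i
    using init[of t0 i] \<open>0 < \<epsilon>\<close> T_nonneg by (simp add: f_def)
  ultimately obtain sm i where "t0 < sm" "0 \<le> f i sm"
    and crossed: "\<And>j s'. s' \<in> {t0..sm} \<Longrightarrow> f j s' \<le> 0"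
    and before: "\<And>j s'. s' \<in> {t0..<sm} \<Longrightarrow> f j s' < 0"
    using first_crossing \<open>t0 \<le> s\<close> by metis
  have "u i sm \<le> u j (sm - \<tau> i j)" if "j \<in> nbrs a i" for j
  proof -
    have "0 \<le> \<tau> i j" "\<tau> i j \<le> T" using delays_bounded that by (auto simp: nbrs_def)
    have "b - \<epsilon> * (1 + sm - t0) \<le> u j (sm - \<tau> i j)"
    proof (cases "t0 \<le> sm - \<tau> i j")
      case True
      have "\<epsilon> * (1 + (sm - \<tau> i j) - t0) \<le> \<epsilon> * (1 + sm - t0)"
        using \<open>0 \<le> \<tau> i j\<close> \<open>0 < \<epsilon>\<close> by (intro mult_left_mono) auto
      then show ?thesis using crossed[of "sm - \<tau> i j" j] True \<open>0 \<le> \<tau> i j\<close>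
        by (simp add: f_def)
    next
      case False
      have "0 \<le> \<epsilon> * (1 + sm - t0)" using \<open>0 < \<epsilon>\<close> \<open>t0 < sm\<close> by simp
      then show ?thesis using init[of "sm - \<tau> i j" j] False \<open>\<tau> i j \<le> T\<close> \<open>t0 < sm\<close> by simp
    qed
    then show ?thesis using \<open>0 \<le> f i sm\<close> by (simp add: f_def)
  qed
  then have "0 \<le> k i * (\<Sum>j\<in>nbrs a i. a i j * (u j (sm - \<tau> i j) - u i sm))"
    by (rule velocity_nonneg_below_neighbours)
  moreover have "(f i has_real_derivative
      - \<epsilon> - k i * (\<Sum>j\<in>nbrs a i. a i j * (u j (sm - \<tau> i j) - u i sm))) (at sm)"
    unfolding f_def using dynamics \<open>0 \<le> t0\<close> \<open>t0 < sm\<close>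
    by (auto intro!: derivative_eq_intros)
  then have "0 \<le> - \<epsilon> - k i * (\<Sum>j\<in>nbrs a i. a i j * (u j (sm - \<tau> i j) - u i sm))"
    by (rule DERIV_nonneg_at_first_crossing) (use \<open>t0 < sm\<close> \<open>0 \<le> f i sm\<close> before in auto)
  ultimately show False using \<open>0 < \<epsilon>\<close> by linarith
qed

lemma lower_bound_invariant:
  assumes "0 \<le> t0" and init: "\<And>i s. s \<in> {t0 - T..t0} \<Longrightarrow> b \<le> u i s" and "t0 - T \<le> s"
  shows "b \<le> u i s"
proof (cases "t0 \<le> s")
  case True
  show ?thesis
  proof (rule field_le_epsilon)
    fix e :: real assume "0 < e"
    have "b - e / (1 + s - t0) * (1 + s - t0) \<le> u i s"
      using True \<open>0 < e\<close> by (intro lower_bound_invariant_eps[OF \<open>0 \<le> t0\<close> init]) auto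
    then show "b \<le> u i s + e" using True by simp
  qed
next
  case False
  then show ?thesis using init \<open>t0 - T \<le> s\<close> by simp
qed

lemma upper_bound_invariant:
  assumes "0 \<le> t0" and init: "\<And>i s. s \<in> {t0 - T..t0} \<Longrightarrow> u i s \<le> B" and "t0 - T \<le> s"
  shows "u i s \<le> B"
  using delayed_consensus.lower_bound_invariant[OF affine_image[of "-1" 0], of t0 "-B"] assms
  by simp

end

text \<open>
  A nonnegative solution that stays above \<delta> at node j on a time window stays above
  \<open>spread_factor a k * \<delta>\<close> at every successor of j from one delay plus one time unit later on;
  \<open>contraction_factor\<close> compounds this along a path of at most \<open>card (edges a)\<close> edges within the
  horizon \<open>spread_time a T\<close>, starting from the exponential decay bound at the root.
\<close>

definition decay_rate :: "('n::finite \<Rightarrow> 'n \<Rightarrow> real) \<Rightarrow> ('n \<Rightarrow> real) \<Rightarrow> real" where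
  "decay_rate a k = 1 + (\<Sum>i\<in>UNIV. k i * (\<Sum>j\<in>nbrs a i. a i j))"

definition min_edge_gain :: "('n::finite \<Rightarrow> 'n \<Rightarrow> real) \<Rightarrow> ('n \<Rightarrow> real) \<Rightarrow> real" where
  "min_edge_gain a k = Min (insert 1 ((\<lambda>(j, i). k i * a i j) ` edges a))"

definition spread_factor :: "('n::finite \<Rightarrow> 'n \<Rightarrow> real) \<Rightarrow> ('n \<Rightarrow> real) \<Rightarrow> real" where
  "spread_factor a k = min_edge_gain a k * (1 - exp (- decay_rate a k)) / decay_rate a k"

definition spread_time :: "('n::finite \<Rightarrow> 'n \<Rightarrow> real) \<Rightarrow> real \<Rightarrow> real" where
  "spread_time a T = (real (card (edges a)) + 1) * (T + 1)"

definition contraction_factor ::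
  "('n::finite \<Rightarrow> 'n \<Rightarrow> real) \<Rightarrow> ('n \<Rightarrow> real) \<Rightarrow> real \<Rightarrow> real" where
  "contraction_factor a k T =
     exp (- decay_rate a k * spread_time a T) * spread_factor a k ^ card (edges a)"

lemma degree_le_decay_rate:
  fixes a :: "'n::finite \<Rightarrow> 'n \<Rightarrow> real"
  assumes nn: "\<forall>i j. i \<noteq> j \<longrightarrow> 0 \<le> a i j" and k: "\<And>i. 0 < k i"
  shows "k i * (\<Sum>j\<in>nbrs a i. a i j) \<le> decay_rate a k" and "1 \<le> decay_rate a k"
proof -
  have terms: "0 \<le> k i * (\<Sum>j\<in>nbrs a i. a i j)" for i
    using nn k[of i] by (intro mult_nonneg_nonneg sum_nonneg) (auto simp: nbrs_def less_imp_le)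
  then show "1 \<le> decay_rate a k" by (simp add: decay_rate_def sum_nonneg)
  have "k i * (\<Sum>j\<in>nbrs a i. a i j) \<le> (\<Sum>i\<in>UNIV. k i * (\<Sum>j\<in>nbrs a i. a i j))"
    using terms by (intro member_le_sum) auto
  then show "k i * (\<Sum>j\<in>nbrs a i. a i j) \<le> decay_rate a k" by (simp add: decay_rate_def)
qed

lemma min_edge_gain_bounds:
  fixes a :: "'n::finite \<Rightarrow> 'n \<Rightarrow> real"
  assumes k: "\<And>i. 0 < k i"
  shows "0 < min_edge_gain a k" and "min_edge_gain a k \<le> 1"
    and "(j, i) \<in> edges a \<Longrightarrow> min_edge_gain a k \<le> k i * a i j"
proof -
  let ?G = "insert 1 ((\<lambda>(j, i). k i * a i j) ` edges a)"
  have "finite ?G" by simp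
  moreover have "\<forall>x\<in>?G. 0 < x" using k by (auto simp: edges_def)
  ultimately show "0 < min_edge_gain a k" unfolding min_edge_gain_def by simp
  show "min_edge_gain a k \<le> 1" unfolding min_edge_gain_def by simp
  assume "(j, i) \<in> edges a"
  then have "k i * a i j \<in> ?G" by force
  then show "min_edge_gain a k \<le> k i * a i j" unfolding min_edge_gain_def by simp
qed

lemma spread_factor_bounds:
  fixes a :: "'n::finite \<Rightarrow> 'n \<Rightarrow> real"
  assumes nn: "\<forall>i j. i \<noteq> j \<longrightarrow> 0 \<le> a i j" and k: "\<And>i. 0 < k i"
  shows "0 < spread_factor a k" and "spread_factor a k \<le> 1"
proof -
  have \<beta>: "1 \<le> decay_rate a k" by (rule degree_le_decay_rate[OF nn k])
  have \<rho>: "0 < min_edge_gain a k" "min_edge_gain a k \<le> 1" by (rule min_edge_gain_bounds[OF k])+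
  have e: "0 < 1 - exp (- decay_rate a k)" "1 - exp (- decay_rate a k) \<le> 1" using \<beta> by auto
  then show "0 < spread_factor a k" using \<beta> \<rho> by (simp add: spread_factor_def)
  have "min_edge_gain a k * (1 - exp (- decay_rate a k)) \<le> decay_rate a k"
    using \<beta> \<rho> e mult_mono[OF \<rho>(2) e(2)] by linarith
  then show "spread_factor a k \<le> 1" using \<beta> by (simp add: spread_factor_def)
qed

lemma contraction_factor_bounds:
  fixes a :: "'n::finite \<Rightarrow> 'n \<Rightarrow> real"
  assumes nn: "\<forall>i j. i \<noteq> j \<longrightarrow> 0 \<le> a i j" and k: "\<And>i. 0 < k i" and "0 \<le> T"
  shows "0 < contraction_factor a k T" and "contraction_factor a k T \<le> 1"
proof -
  have \<rho>: "0 < spread_factor a k" "spread_factor a k \<le> 1" by (rule spread_factor_bounds[OF nn k])+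
  show "0 < contraction_factor a k T" using \<rho> by (simp add: contraction_factor_def)
  have "0 \<le> decay_rate a k * spread_time a T"
    using degree_le_decay_rate(2)[of a k, OF nn k] \<open>0 \<le> T\<close> by (simp add: spread_time_def)
  then show "contraction_factor a k T \<le> 1"
    using \<rho> by (simp add: contraction_factor_def mult_le_one power_le_one)
qed

context delayed_consensus
begin

lemma decay_rate_ge_one: "1 \<le> decay_rate a k"
  using degree_le_decay_rate(2)[of a k, OF weights_nonneg gains_pos] .

lemma spread_factor_in_unit: "0 < spread_factor a k" "spread_factor a k \<le> 1"
  using spread_factor_bounds[of a k, OF weights_nonneg gains_pos] by auto

lemma contraction_factor_in_unit: "0 < contraction_factor a k T" "contraction_factor a k T \<le> 1"
  using contraction_factor_bounds[of a k, OF weights_nonneg gains_pos T_nonneg] by auto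

lemma delayed_term_nonneg:
  assumes nonneg: "\<And>j s. t0 - T \<le> s \<Longrightarrow> 0 \<le> u j s" and "t0 \<le> s" and "j \<in> nbrs a i"
  shows "0 \<le> a i j * u j (s - \<tau> i j)"
proof -
  have "j \<noteq> i" using \<open>j \<in> nbrs a i\<close> by (simp add: nbrs_def)
  then have "0 \<le> a i j" "0 \<le> u j (s - \<tau> i j)"
    using weights_nonneg delays_bounded[of i j] nonneg \<open>t0 \<le> s\<close> by auto
  then show ?thesis by simp
qed

lemma velocity_lower_bound:
  assumes nonneg: "\<And>j s. t0 - T \<le> s \<Longrightarrow> 0 \<le> u j s" and "t0 \<le> s"
  shows "k i * (\<Sum>j\<in>nbrs a i. a i j * u j (s - \<tau> i j)) - decay_rate a k * u i s
    \<le> k i * (\<Sum>j\<in>nbrs a i. a i j * (u j (s - \<tau> i j) - u i s))"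
proof -
  have "0 \<le> u i s" using nonneg \<open>t0 \<le> s\<close> T_nonneg by simp
  then have "k i * (\<Sum>j\<in>nbrs a i. a i j) * u i s \<le> decay_rate a k * u i s"
    by (intro mult_right_mono degree_le_decay_rate[OF weights_nonneg gains_pos])
  then show ?thesis
    by (simp add: right_diff_distrib sum_subtractf sum_distrib_left sum_distrib_right mult_ac)
qed

lemma root_decay_bound:
  assumes "0 \<le> t0" and nonneg: "\<And>j s. t0 - T \<le> s \<Longrightarrow> 0 \<le> u j s" and "t0 \<le> s"
  shows "u r t0 * exp (- decay_rate a k * (s - t0)) \<le> u r s"
proof -
  have "0 / decay_rate a k + (u r t0 - 0 / decay_rate a k) * exp (- decay_rate a k * (s - t0))
      \<le> u r s"
  proof (rule differential_inequality_lower_bound[OF \<open>t0 \<le> s\<close>])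
    show "0 < decay_rate a k"
      using decay_rate_ge_one by simp
    show "continuous_on {t0..s} (u r)" using continuous_on_Icc[OF \<open>0 \<le> t0\<close>] .
    fix s' assume s': "t0 < s'" "s' < s"
    then show "(u r has_real_derivative
        k r * (\<Sum>j\<in>nbrs a r. a r j * (u j (s' - \<tau> r j) - u r s'))) (at s')"
      using \<open>0 \<le> t0\<close> by (intro dynamics) simp
    have "0 \<le> (\<Sum>j\<in>nbrs a r. a r j * u j (s' - \<tau> r j))"
      using delayed_term_nonneg[of t0, OF nonneg] s' by (intro sum_nonneg) auto
    then have "0 \<le> k r * (\<Sum>j\<in>nbrs a r. a r j * u j (s' - \<tau> r j))"
      using gains_pos[of r] by simp
    then show "0 - decay_rate a k * u r s'
        \<le> k r * (\<Sum>j\<in>nbrs a r. a r j * (u j (s' - \<tau> r j) - u r s'))"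
      using velocity_lower_bound[of t0 s' r, OF nonneg] s' by simp
  qed
  then show ?thesis by simp
qed

lemma edge_spread_bound:
  assumes "0 \<le> t0" and nonneg: "\<And>j s. t0 - T \<le> s \<Longrightarrow> 0 \<le> u j s"
    and edge: "(j, i) \<in> edges a" and "t0 \<le> S" and "0 \<le> \<delta>"
    and upstream: "\<And>s. s \<in> {S..H} \<Longrightarrow> \<delta> \<le> u j s" and "S + T + 1 \<le> s" and "s \<le> H"
  shows "spread_factor a k * \<delta> \<le> u i s"
proof -
  let ?\<beta> = "decay_rate a k" and ?g = "min_edge_gain a k * \<delta>"
  have \<beta>: "1 \<le> ?\<beta>" by (rule decay_rate_ge_one)
  define E where "E = exp (- ?\<beta> * (s - (S + T)))"
  have bound: "?g / ?\<beta> + (u i (S + T) - ?g / ?\<beta>) * E \<le> u i s"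
    unfolding E_def
  proof (rule differential_inequality_lower_bound)
    show "S + T \<le> s" "0 < ?\<beta>" using \<open>S + T + 1 \<le> s\<close> \<beta> by auto
    show "continuous_on {S + T..s} (u i)"
      using \<open>0 \<le> t0\<close> \<open>t0 \<le> S\<close> T_nonneg by (intro continuous_on_Icc) simp
    fix s' assume s': "S + T < s'" "s' < s"
    then show "(u i has_real_derivative
        k i * (\<Sum>l\<in>nbrs a i. a i l * (u l (s' - \<tau> i l) - u i s'))) (at s')"
      using \<open>0 \<le> t0\<close> \<open>t0 \<le> S\<close> T_nonneg by (intro dynamics) simp
    have "j \<in> nbrs a i" "j \<noteq> i" using edge by (auto simp: edges_def nbrs_def)
    then have "s' - \<tau> i j \<in> {S..H}" using delays_bounded[of i j] s' \<open>s \<le> H\<close> by auto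
    then have "k i * a i j * \<delta> \<le> k i * (a i j * u j (s' - \<tau> i j))"
      using upstream edge gains_pos[of i] by (simp add: edges_def)
    also have "\<dots> \<le> k i * (\<Sum>l\<in>nbrs a i. a i l * u l (s' - \<tau> i l))"
      using \<open>j \<in> nbrs a i\<close> delayed_term_nonneg[of t0, OF nonneg] gains_pos[of i] s' \<open>t0 \<le> S\<close> T_nonneg
      by (intro mult_left_mono member_le_sum) auto
    finally have "?g \<le> k i * (\<Sum>l\<in>nbrs a i. a i l * u l (s' - \<tau> i l))"
      using min_edge_gain_bounds(3)[where a = a and k = k, OF gains_pos edge] \<open>0 \<le> \<delta>\<close>
      by (meson mult_right_mono order_trans)
    then show "?g - ?\<beta> * u i s' \<le> k i * (\<Sum>l\<in>nbrs a i. a i l * (u l (s' - \<tau> i l) - u i s'))"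
      using velocity_lower_bound[of t0 s' i, OF nonneg] s' \<open>t0 \<le> S\<close> T_nonneg by simp
  qed
  have "E \<le> exp (- ?\<beta>)" using \<beta> \<open>S + T + 1 \<le> s\<close> by (simp add: E_def)
  moreover have "0 \<le> ?g"
    using \<open>0 \<le> \<delta>\<close> min_edge_gain_bounds(1)[where a = a and k = k, OF gains_pos] by simp
  ultimately have "?g / ?\<beta> * (1 - exp (- ?\<beta>)) \<le> ?g / ?\<beta> * (1 - E)"
    using \<beta> by (intro mult_left_mono) auto
  also have "\<dots> \<le> ?g / ?\<beta> + (u i (S + T) - ?g / ?\<beta>) * E"
    using nonneg[of "S + T" i] \<open>t0 \<le> S\<close> T_nonneg by (simp add: E_def algebra_simps)
  also note bound
  finally show ?thesis by (simp add: spread_factor_def mult_ac)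
qed

lemma path_spread_bound:
  assumes "0 \<le> t0" and nonneg: "\<And>j s. t0 - T \<le> s \<Longrightarrow> 0 \<le> u j s"
    and "(r, i) \<in> edges a ^^ p" and "t0 + real p * (T + 1) \<le> s" and "s \<le> H"
  shows "spread_factor a k ^ p * exp (- decay_rate a k * (H - t0)) * u r t0 \<le> u i s"
  using assms(3-5)
proof (induction p arbitrary: i s)
  case 0
  then have "i = r" "t0 \<le> s" by auto
  have "exp (- decay_rate a k * (H - t0)) \<le> exp (- decay_rate a k * (s - t0))"
    using \<open>s \<le> H\<close> decay_rate_ge_one by simp
  then have "exp (- decay_rate a k * (H - t0)) * u r t0 \<le> exp (- decay_rate a k * (s - t0)) * u r t0"
    using nonneg[of t0 r] T_nonneg by (intro mult_right_mono) auto
  also have "\<dots> \<le> u r s"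
    using root_decay_bound[OF \<open>0 \<le> t0\<close> nonneg \<open>t0 \<le> s\<close>] by (simp add: mult.commute)
  finally show ?case using \<open>i = r\<close> by simp
next
  case (Suc p)
  then obtain j where "(r, j) \<in> edges a ^^ p" and edge: "(j, i) \<in> edges a" by auto
  let ?\<delta> = "spread_factor a k ^ p * exp (- decay_rate a k * (H - t0)) * u r t0"
  have "?\<delta> \<le> u j s'" if "s' \<in> {t0 + real p * (T + 1)..H}" for s'
    using Suc.IH[OF \<open>(r, j) \<in> edges a ^^ p\<close>] that by simp
  moreover have "0 \<le> ?\<delta>" using spread_factor_in_unit(1) nonneg[of t0 r] T_nonneg by simp
  ultimately have "spread_factor a k * ?\<delta> \<le> u i s"
    using \<open>0 \<le> t0\<close> T_nonneg Suc.prems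
    by (intro edge_spread_bound[OF \<open>0 \<le> t0\<close> nonneg edge, of "t0 + real p * (T + 1)" _ H])
      (auto simp: algebra_simps)
  then show ?case by (simp add: mult_ac)
qed

lemma positivity_spreading:
  assumes "0 \<le> t0" and nonneg: "\<And>j s. t0 - T \<le> s \<Longrightarrow> 0 \<le> u j s"
    and root: "reaches a r i"
    and "s \<in> {t0 + spread_time a T - T..t0 + spread_time a T}"
  shows "contraction_factor a k T * u r t0 \<le> u i s"
proof -
  let ?\<rho> = "spread_factor a k" and ?P = "card (edges a)"
  obtain p where "p \<le> ?P" and path: "(r, i) \<in> edges a ^^ p"
    using reaches_relpow_card[OF root] .
  have \<rho>: "0 < ?\<rho>" "?\<rho> \<le> 1" by (rule spread_factor_in_unit)+
  have "real p * (T + 1) \<le> real ?P * (T + 1)"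
    using \<open>p \<le> ?P\<close> T_nonneg by (intro mult_right_mono) auto
  then have "t0 + real p * (T + 1) \<le> s"
    using assms(4) by (auto simp: spread_time_def algebra_simps)
  then have "?\<rho> ^ p * exp (- decay_rate a k * spread_time a T) * u r t0 \<le> u i s"
    using path_spread_bound[OF \<open>0 \<le> t0\<close> nonneg path, of s "t0 + spread_time a T"] assms(4)
    by simp
  moreover have "?\<rho> ^ ?P \<le> ?\<rho> ^ p" using \<rho> \<open>p \<le> ?P\<close> by (intro power_decreasing) auto
  then have "contraction_factor a k T * u r t0
      \<le> ?\<rho> ^ p * exp (- decay_rate a k * spread_time a T) * u r t0"
    using nonneg[of t0 r] T_nonneg
    by (auto simp: contraction_factor_def mult_ac intro!: mult_left_mono)
  ultimately show ?thesis by linarith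
qed

lemma contraction_step:
  assumes "0 \<le> t0" and root: "\<forall>j. reaches a r j"
    and bounds: "\<And>i s. s \<in> {t0 - T..t0} \<Longrightarrow> b \<le> u i s \<and> u i s \<le> B"
  obtains b' B' where "B' - b' \<le> (1 - contraction_factor a k T / 2) * (B - b)"
    and "\<And>i s. s \<in> {t0 + spread_time a T - T..t0 + spread_time a T} \<Longrightarrow> b' \<le> u i s \<and> u i s \<le> B'"
proof -
  let ?\<eta> = "contraction_factor a k T" and ?W = "{t0 + spread_time a T - T..t0 + spread_time a T}"
  have lower: "b \<le> u i s" and upper: "u i s \<le> B" if "t0 - T \<le> s" for i s
    using lower_bound_invariant[OF \<open>0 \<le> t0\<close>] upper_bound_invariant[OF \<open>0 \<le> t0\<close>] bounds that
    by blast+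
  have "T \<le> spread_time a T"
    using T_nonneg by (simp add: spread_time_def algebra_simps add_increasing mult_nonneg_nonneg)
  then have window: "t0 - T \<le> s" if "s \<in> ?W" for s using that T_nonneg by auto
  \<comment> \<open>Whichever half of [b, B] the root occupies at t0, its distance from the opposite bound
    spreads to every node.\<close>
  show thesis
  proof (cases "u r t0 \<le> (B + b) / 2")
    case True
    interpret gap: delayed_consensus a k \<tau> T "\<lambda>i t. -1 * u i t + B" by (rule affine_image)
    have spread: "?\<eta> * (B - u r t0) \<le> B - u i s" if "s \<in> ?W" for i s
      using gap.positivity_spreading[OF \<open>0 \<le> t0\<close> _ root[rule_format, of i] that] upper by simp
    have half: "?\<eta> * (B - b) / 2 \<le> ?\<eta> * (B - u r t0)"
      using True contraction_factor_in_unit(1) by (simp add: mult_left_mono)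
    have "u i s \<le> B - ?\<eta> * (B - b) / 2" if "s \<in> ?W" for i s
      using spread[of s i, OF that] half by linarith
    with lower window show thesis
      by (intro that[of "B - ?\<eta> * (B - b) / 2" b]) (simp_all add: algebra_simps)
  next
    case False
    interpret gap: delayed_consensus a k \<tau> T "\<lambda>i t. 1 * u i t + - b" by (rule affine_image)
    have spread: "?\<eta> * (u r t0 - b) \<le> u i s - b" if "s \<in> ?W" for i s
      using gap.positivity_spreading[OF \<open>0 \<le> t0\<close> _ root[rule_format, of i] that] lower by simp
    have half: "?\<eta> * (B - b) / 2 \<le> ?\<eta> * (u r t0 - b)"
      using False contraction_factor_in_unit(1) by (simp add: mult_left_mono)
    have "b + ?\<eta> * (B - b) / 2 \<le> u i s" if "s \<in> ?W" for i s
      using spread[of s i, OF that] half by linarith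
    with upper window show thesis
      by (intro that[of B "b + ?\<eta> * (B - b) / 2"]) (simp_all add: algebra_simps)
  qed
qed

lemma iterated_contraction:
  assumes root: "\<forall>j. reaches a r j"
    and init: "\<And>i s. s \<in> {-T..0} \<Longrightarrow> b \<le> u i s \<and> u i s \<le> B"
  shows "\<exists>b' B'. B' - b' \<le> (1 - contraction_factor a k T / 2) ^ n * (B - b) \<and>
    (\<forall>i s. s \<in> {real n * spread_time a T - T..real n * spread_time a T} \<longrightarrow> b' \<le> u i s \<and> u i s \<le> B')"
proof (induction n)
  case 0
  show ?case using init by auto
next
  case (Suc n)
  let ?q = "1 - contraction_factor a k T / 2" and ?t = "real n * spread_time a T"
  obtain b' B' where width: "B' - b' \<le> ?q ^ n * (B - b)"
    and bounds: "\<And>i s. s \<in> {?t - T..?t} \<Longrightarrow> b' \<le> u i s \<and> u i s \<le> B'"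
    using Suc.IH by blast
  have "0 \<le> ?t" using T_nonneg by (simp add: spread_time_def)
  then obtain b'' B'' where width': "B'' - b'' \<le> ?q * (B' - b')"
    and bounds': "\<And>i s. s \<in> {?t + spread_time a T - T..?t + spread_time a T} \<Longrightarrow> b'' \<le> u i s \<and> u i s \<le> B''"
    using contraction_step[OF _ root bounds] by blast
  have q0: "0 \<le> ?q" using contraction_factor_in_unit(2) by simp
  have "?q * (B' - b') \<le> ?q * (?q ^ n * (B - b))" using width q0 by (rule mult_left_mono)
  then have "?q * (B' - b') \<le> ?q ^ Suc n * (B - b)" by (simp add: mult.assoc)
  moreover have "real (Suc n) * spread_time a T = ?t + spread_time a T" by (simp add: algebra_simps)
  ultimately show ?case using width' bounds' by (metis order_trans)
qed

lemma initial_window_bounded: "\<exists>M. \<forall>i s. s \<in> {-T..0} \<longrightarrow> \<bar>u i s\<bar> \<le> M"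
proof -
  have "compact (\<Union>i. u i ` {-T..0})"
    by (intro compact_UN compact_continuous_image continuous_on_subset[OF continuous]) auto
  then have "bounded (\<Union>i. u i ` {-T..0})" by (rule compact_imp_bounded)
  then show ?thesis unfolding bounded_real by blast
qed

theorem consensus:
  assumes root: "\<forall>j. reaches a r j" and "0 < \<epsilon>"
  shows "\<exists>S. \<forall>i j s s'. S \<le> s \<longrightarrow> S \<le> s' \<longrightarrow> \<bar>u i s - u j s'\<bar> \<le> \<epsilon>"
proof -
  let ?q = "1 - contraction_factor a k T / 2"
  obtain M where M: "\<And>i s. s \<in> {-T..0} \<Longrightarrow> \<bar>u i s\<bar> \<le> M" using initial_window_bounded by blast
  have "\<bar>u i 0\<bar> \<le> M" for i using M T_nonneg by simp
  then have "0 \<le> M" by (rule order_trans[OF abs_ge_zero])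
  obtain n where n: "?q ^ n < \<epsilon> / (2 * M + 1)"
    using real_arch_pow_inv[of "\<epsilon> / (2 * M + 1)" ?q] contraction_factor_in_unit(1) \<open>0 < \<epsilon>\<close> \<open>0 \<le> M\<close>
    by auto
  let ?t = "real n * spread_time a T"
  have "- M \<le> u i s \<and> u i s \<le> M" if "s \<in> {-T..0}" for i s
    using M[of s i] that by (simp add: abs_le_iff)
  then obtain b B where width: "B - b \<le> ?q ^ n * (M - - M)"
    and bounds: "\<And>i s. s \<in> {?t - T..?t} \<Longrightarrow> b \<le> u i s \<and> u i s \<le> B"
    using iterated_contraction[OF root, of "- M" M n] by blast
  have "0 \<le> ?t" using T_nonneg by (simp add: spread_time_def)
  have "?q ^ n * (2 * M) \<le> \<epsilon> / (2 * M + 1) * (2 * M + 1)"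
    using n \<open>0 \<le> M\<close> \<open>0 < \<epsilon>\<close> by (intro mult_mono) auto
  with width \<open>0 \<le> M\<close> have "B - b \<le> \<epsilon>" by simp
  moreover have after: "b \<le> u i s \<and> u i s \<le> B" if "?t - T \<le> s" for i s
    using lower_bound_invariant[OF \<open>0 \<le> ?t\<close>] upper_bound_invariant[OF \<open>0 \<le> ?t\<close>] bounds that
    by blast
  ultimately have "\<bar>u i s - u j s'\<bar> \<le> \<epsilon>" if "?t - T \<le> s" "?t - T \<le> s'" for i j s s'
    using after[OF that(1), of i] after[OF that(2), of j] by (simp add: abs_le_iff)
  then show ?thesis by blast
qed

lemma disagreement_tendsto_zero:
  assumes root: "\<forall>j. reaches a r j"
  shows "((\<lambda>t. u j (t - \<sigma>) - u i t) \<longlongrightarrow> 0) at_top"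
proof (rule tendstoI)
  fix \<epsilon> :: real assume "0 < \<epsilon>"
  then have "0 < \<epsilon> / 2" by simp
  then obtain S where S: "\<forall>i j s s'. S \<le> s \<longrightarrow> S \<le> s' \<longrightarrow> \<bar>u i s - u j s'\<bar> \<le> \<epsilon> / 2"
    using consensus[OF root] by blast
  have "dist (u j (t - \<sigma>) - u i t) 0 < \<epsilon>" if "S + \<bar>\<sigma>\<bar> \<le> t" for t
  proof -
    have "S \<le> t - \<sigma>" "S \<le> t" using that abs_ge_self[of \<sigma>] abs_ge_minus_self[of \<sigma>] by linarith+
    then have "\<bar>u j (t - \<sigma>) - u i t\<bar> \<le> \<epsilon> / 2" using S by blast
    then show ?thesis using \<open>0 < \<epsilon>\<close> by (simp add: dist_real_def)
  qed
  then show "eventually (\<lambda>t. dist (u j (t - \<sigma>) - u i t) 0 < \<epsilon>) at_top"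
    by (rule eventually_at_top_linorderI)
qed

lemma velocity_tendsto_zero:
  assumes root: "\<forall>j. reaches a r j"
  shows "((\<lambda>t. k i * (\<Sum>j\<in>nbrs a i. a i j * (u j (t - \<tau> i j) - u i t))) \<longlongrightarrow> 0) at_top"
  using disagreement_tendsto_zero[OF root]
  by (intro tendsto_mult_right_zero tendsto_null_sum tendsto_mult_right_zero)

end

section \<open>Synchronization\<close>

lemma tau_max_bounds:
  fixes \<tau> :: "'n::finite \<Rightarrow> 'n \<Rightarrow> real"
  shows "0 \<le> tau_max \<tau>" and "i \<noteq> j \<Longrightarrow> \<tau> i j \<le> tau_max \<tau>"
proof -
  have "{\<tau> i j |i j. i \<noteq> j} \<subseteq> (\<lambda>(i, j). \<tau> i j) ` UNIV" by auto
  then have "finite (insert 0 {\<tau> i j |i j. i \<noteq> j})" by (simp add: finite_subset)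
  then show "0 \<le> tau_max \<tau>" "i \<noteq> j \<Longrightarrow> \<tau> i j \<le> tau_max \<tau>"
    unfolding tau_max_def by (auto intro: Max_ge)
qed

lemma omega_star_denominator_pos:
  fixes a :: "'n::finite \<Rightarrow> 'n \<Rightarrow> real"
  assumes K: "K > 0" and c: "\<forall>i. c i > 0" and nn: "\<forall>i j. i \<noteq> j \<longrightarrow> 0 \<le> a i j"
    and dok: "delays_ok \<tau>" and \<gamma>: "normalized_left_null a \<gamma>"
  shows "0 < (\<Sum>i\<in>UNIV. \<gamma> $ i * c i) + K * (\<Sum>i\<in>UNIV. \<Sum>j\<in>nbrs a i. \<gamma> $ i * a i j * \<tau> i j)"
proof -
  have "\<gamma> \<noteq> 0" and \<gamma>_nonneg: "\<forall>i. 0 \<le> \<gamma>$i" using \<gamma> by (auto simp: normalized_left_null_def)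
  then obtain i0 where "\<gamma>$i0 \<noteq> 0" by (auto simp: vec_eq_iff)
  then have "0 < \<gamma>$i0 * c i0" using \<gamma>_nonneg c by (simp add: less_le)
  then have "0 < (\<Sum>i\<in>UNIV. \<gamma> $ i * c i)"
    using \<gamma>_nonneg c by (intro sum_pos2[where i = i0]) (auto simp: less_imp_le)
  moreover have "0 \<le> (\<Sum>i\<in>UNIV. \<Sum>j\<in>nbrs a i. \<gamma> $ i * a i j * \<tau> i j)"
    using \<gamma>_nonneg nn dok by (intro sum_nonneg) (auto simp: nbrs_def delays_ok_def)
  ultimately show ?thesis using K by (simp add: add_pos_nonneg)
qed

lemma ex_synchronous_offsets:
  fixes a :: "'n::finite \<Rightarrow> 'n \<Rightarrow> real" and g :: "'n \<Rightarrow> real \<Rightarrow> real" and y :: "'n \<Rightarrow> real"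
  assumes K: "K > 0" and c: "\<forall>i. c i > 0" and nn: "\<forall>i j. i \<noteq> j \<longrightarrow> 0 \<le> a i j"
    and q: "QSC a" and dok: "delays_ok \<tau>" and \<gamma>: "normalized_left_null a \<gamma>"
  defines "\<omega> \<equiv> omega_star g y c K a \<tau> \<gamma>"
  shows "\<exists>d. \<forall>i t. g i (y i) + K / c i * (\<Sum>j\<in>nbrs a i. a i j * ((\<omega> * (t - \<tau> i j) + d j) - (\<omega> * t + d i))) = \<omega>"
proof -
  let ?A = "\<lambda>i. \<Sum>j\<in>nbrs a i. a i j * \<tau> i j"
  \<comment> \<open>\<omega> is exactly the value that makes b orthogonal to \<gamma>.\<close>
  define b :: "real^'n" where "b = (\<chi> i. (c i * g i (y i) - \<omega> * (c i + K * ?A i)) / K)"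
  let ?den = "(\<Sum>i\<in>UNIV. \<gamma> $ i * c i) + K * (\<Sum>i\<in>UNIV. \<Sum>j\<in>nbrs a i. \<gamma> $ i * a i j * \<tau> i j)"
  have "\<gamma> \<bullet> b = (\<Sum>i\<in>UNIV. \<gamma>$i * (c i * g i (y i) - \<omega> * (c i + K * ?A i))) / K"
    by (simp add: b_def inner_vec_def sum_divide_distrib)
  also have "(\<Sum>i\<in>UNIV. \<gamma>$i * (c i * g i (y i) - \<omega> * (c i + K * ?A i)))
      = (\<Sum>i\<in>UNIV. \<gamma> $ i * c i * g i (y i)) - \<omega> * ?den"
    by (simp add: right_diff_distrib distrib_left sum_subtractf sum.distrib sum_distrib_left mult_ac)
  also have "\<dots> = 0"
    using omega_star_denominator_pos[OF K c nn dok \<gamma>] by (simp add: \<omega>_def omega_star_def)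
  finally have "\<gamma> \<bullet> b = 0" by simp
  moreover have "\<gamma> v* laplacian a = 0" "\<gamma> \<noteq> 0" using \<gamma> by (auto simp: normalized_left_null_def)
  ultimately obtain d where "laplacian a *v d = b" using ex_laplacian_preimage[OF q nn] by blast
  then have d: "(\<Sum>j\<in>nbrs a i. a i j * (d$i - d$j)) = (c i * g i (y i) - \<omega> * (c i + K * ?A i)) / K" for i
    using laplacian_mult_vector[of a d i] by (simp add: b_def)
  have "g i (y i) + K / c i * (\<Sum>j\<in>nbrs a i. a i j * ((\<omega> * (t - \<tau> i j) + d$j) - (\<omega> * t + d$i))) = \<omega>"
    for i t
  proof -
    have "(\<Sum>j\<in>nbrs a i. a i j * ((\<omega> * (t - \<tau> i j) + d$j) - (\<omega> * t + d$i)))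
        = - \<omega> * ?A i - (\<Sum>j\<in>nbrs a i. a i j * (d$i - d$j))"
      by (simp add: algebra_simps sum_subtractf sum.distrib sum_distrib_left sum_negf)
    then show ?thesis unfolding d[of i] using K c[rule_format, of i] by (simp add: field_simps)
  qed
  then show ?thesis by blast
qed

lemma coupling_deviation:
  fixes A d \<tau> :: "'j \<Rightarrow> real" and x :: "'j \<Rightarrow> real \<Rightarrow> real" and \<omega> t :: real
  assumes sync: "g + K / c * (\<Sum>j\<in>J. A j * ((\<omega> * (t - \<tau> j) + d j) - (\<omega> * t + d i))) = \<omega>"
  shows "g + K / c * (\<Sum>j\<in>J. A j * (x j (t - \<tau> j) - x i t))
    = \<omega> + K / c * (\<Sum>j\<in>J. A j * ((x j (t - \<tau> j) - (\<omega> * (t - \<tau> j) + d j))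
                                     - (x i t - (\<omega> * t + d i))))"
proof -
  have "(\<Sum>j\<in>J. A j * (x j (t - \<tau> j) - x i t))
        - (\<Sum>j\<in>J. A j * ((\<omega> * (t - \<tau> j) + d j) - (\<omega> * t + d i)))
      = (\<Sum>j\<in>J. A j * (x j (t - \<tau> j) - x i t) - A j * ((\<omega> * (t - \<tau> j) + d j) - (\<omega> * t + d i)))"
    by (rule sum_subtractf[symmetric])
  also have "\<dots> = (\<Sum>j\<in>J. A j * ((x j (t - \<tau> j) - (\<omega> * (t - \<tau> j) + d j)) - (x i t - (\<omega> * t + d i))))"
    by (rule sum.cong) (simp_all add: algebra_simps)
  finally have "(\<Sum>j\<in>J. A j * (x j (t - \<tau> j) - x i t))
      = (\<Sum>j\<in>J. A j * ((\<omega> * (t - \<tau> j) + d j) - (\<omega> * t + d i)))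
        + (\<Sum>j\<in>J. A j * ((x j (t - \<tau> j) - (\<omega> * (t - \<tau> j) + d j)) - (x i t - (\<omega> * t + d i))))"
    by (simp add: algebra_simps)
  moreover have "g = \<omega> - K / c * (\<Sum>j\<in>J. A j * ((\<omega> * (t - \<tau> j) + d j) - (\<omega> * t + d i)))"
    using sync by simp
  ultimately show ?thesis by (simp add: distrib_left)
qed

lemma deviation_delayed_consensus:
  fixes a :: "'n::finite \<Rightarrow> 'n \<Rightarrow> real"
  assumes K: "K > 0" and c: "\<forall>i. c i > 0" and nn: "\<forall>i j. i \<noteq> j \<longrightarrow> 0 \<le> a i j"
    and dok: "delays_ok \<tau>"
    and sync: "\<And>i t. g i (y i) + K / c i *
      (\<Sum>j\<in>nbrs a i. a i j * ((\<omega> * (t - \<tau> i j) + d j) - (\<omega> * t + d i))) = \<omega>"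
    and sol: "is_solution g y c K a \<tau> \<phi> x"
  shows "delayed_consensus a (\<lambda>i. K / c i) \<tau> (tau_max \<tau>) (\<lambda>i t. x i t - (\<omega> * t + d i))"
proof
  fix i and t :: real assume "0 < t"
  then have "(x i has_real_derivative
      g i (y i) + K / c i * (\<Sum>j\<in>nbrs a i. a i j * (x j (t - \<tau> i j) - x i t))) (at t)"
    using sol by (simp add: is_solution_def)
  then show "((\<lambda>t. x i t - (\<omega> * t + d i)) has_real_derivative K / c i * (\<Sum>j\<in>nbrs a i.
      a i j * ((x j (t - \<tau> i j) - (\<omega> * (t - \<tau> i j) + d j)) - (x i t - (\<omega> * t + d i))))) (at t)"
    unfolding coupling_deviation[OF sync] by (auto intro!: derivative_eq_intros)
qed (use K c nn dok sol tau_max_bounds in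
     \<open>auto simp: delays_ok_def is_solution_def intro!: continuous_intros\<close>)

lemma deriv_tendsto_omega:
  fixes a :: "'n::finite \<Rightarrow> 'n \<Rightarrow> real"
  assumes K: "K > 0" and c: "\<forall>i. c i > 0" and nn: "\<forall>i j. i \<noteq> j \<longrightarrow> 0 \<le> a i j"
    and q: "QSC a" and dok: "delays_ok \<tau>"
    and sync: "\<And>i t. g i (y i) + K / c i *
      (\<Sum>j\<in>nbrs a i. a i j * ((\<omega> * (t - \<tau> i j) + d j) - (\<omega> * t + d i))) = \<omega>"
    and sol: "is_solution g y c K a \<tau> \<phi> x"
  shows "((\<lambda>t. \<bar>deriv (x i) t - \<omega>\<bar>) \<longlongrightarrow> 0) at_top"
proof -
  interpret deviation: delayed_consensus a "\<lambda>i. K / c i" \<tau> "tau_max \<tau>" "\<lambda>i t. x i t - (\<omega> * t + d i)"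
    by (rule deviation_delayed_consensus[OF K c nn dok sync sol])
  obtain r where "\<forall>j. reaches a r j" using QSC_imp_root[OF q] by blast
  then have "((\<lambda>t. K / c i * (\<Sum>j\<in>nbrs a i. a i j * ((x j (t - \<tau> i j) - (\<omega> * (t - \<tau> i j) + d j))
      - (x i t - (\<omega> * t + d i))))) \<longlongrightarrow> 0) at_top"
    by (rule deviation.velocity_tendsto_zero)
  moreover have "K / c i * (\<Sum>j\<in>nbrs a i. a i j * ((x j (t - \<tau> i j) - (\<omega> * (t - \<tau> i j) + d j))
      - (x i t - (\<omega> * t + d i)))) = deriv (x i) t - \<omega>" if "1 \<le> t" for t
  proof -
    have "(x i has_real_derivative
        g i (y i) + K / c i * (\<Sum>j\<in>nbrs a i. a i j * (x j (t - \<tau> i j) - x i t))) (at t)"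
      using sol \<open>1 \<le> t\<close> by (simp add: is_solution_def)
    then show ?thesis using coupling_deviation[OF sync] by (simp add: DERIV_imp_deriv)
  qed
  ultimately have "((\<lambda>t. deriv (x i) t - \<omega>) \<longlongrightarrow> 0) at_top"
    by (rule Lim_transform_eventually[OF _ eventually_at_top_linorderI])
  then show ?thesis by (rule tendsto_rabs_zero)
qed

lemma QSC_imp_globally_synchronizes_to:
  fixes a :: "'n::finite \<Rightarrow> 'n \<Rightarrow> real"
  assumes K: "K > 0" and c: "\<forall>i. c i > 0" and nn: "\<forall>i j. i \<noteq> j \<longrightarrow> 0 \<le> a i j"
    and q: "QSC a" and dok: "delays_ok \<tau>" and \<gamma>: "normalized_left_null a \<gamma>"
  shows "globally_synchronizes_to g y c K a \<tau> (omega_star g y c K a \<tau> \<gamma>)"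
proof -
  define \<omega> where "\<omega> = omega_star g y c K a \<tau> \<gamma>"
  obtain d where sync: "\<And>i t. g i (y i) + K / c i *
      (\<Sum>j\<in>nbrs a i. a i j * ((\<omega> * (t - \<tau> i j) + d j) - (\<omega> * t + d i))) = \<omega>"
    using ex_synchronous_offsets[OF K c nn q dok \<gamma>, of g y] unfolding \<omega>_def by blast
  define xs where "xs i t = \<omega> * t + d i" for i t
  have xs_deriv: "(xs i has_real_derivative \<omega>) (at t)" for i t
    unfolding xs_def by (auto intro!: derivative_eq_intros)
  have "admissible_init \<tau> xs"
    unfolding admissible_init_def xs_def
    by (auto intro!: continuous_intros compact_imp_bounded compact_continuous_image)
  moreover have "is_solution g y c K a \<tau> xs xs"
    using xs_deriv sync by (auto simp: is_solution_def xs_def intro!: continuous_intros)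
  ultimately show ?thesis
    unfolding globally_synchronizes_to_def \<omega>_def[symmetric]
    using xs_deriv deriv_tendsto_omega[where g = g and y = y and \<omega> = \<omega> and d = d, OF K c nn q dok sync] by blast
qed

theorem theorem1:
  fixes g :: "'n::finite \<Rightarrow> real \<Rightarrow> real" and y :: "'n \<Rightarrow> real" and c :: "'n \<Rightarrow> real"
    and K :: real and a :: "'n \<Rightarrow> 'n \<Rightarrow> real"
  assumes "K > 0" and "\<forall>i. c i > 0" and "\<forall>i j. i \<noteq> j \<longrightarrow> 0 \<le> a i j"
  shows "((\<forall>(g'::'n \<Rightarrow> real \<Rightarrow> real) (y'::'n \<Rightarrow> real) \<tau>. delays_ok \<tau> \<longrightarrow>
              globally_synchronizes g' y' c K a \<tau>) \<longleftrightarrow> QSC a)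
    \<and> (QSC a \<longrightarrow>
        (\<forall>\<tau> \<gamma>. delays_ok \<tau> \<longrightarrow> normalized_left_null a \<gamma> \<longrightarrow>
            globally_synchronizes_to g y c K a \<tau> (omega_star g y c K a \<tau> \<gamma>)
            \<and> (\<forall>i. 0 < \<gamma> $ i \<longleftrightarrow> (\<forall>j. j \<noteq> i \<longrightarrow> reaches a i j))))"
proof -
  have "(\<forall>g' y' \<tau>. delays_ok \<tau> \<longrightarrow> globally_synchronizes g' y' c K a \<tau>) \<longleftrightarrow> QSC a"
  proof
    assume "\<forall>g' y' \<tau>. delays_ok \<tau> \<longrightarrow> globally_synchronizes g' y' c K a \<tau>"
    then show "QSC a" using not_QSC_imp_not_synchronizes[OF assms] by blast
  next
    assume "QSC a"
    obtain \<gamma> where "normalized_left_null a \<gamma>" using ex_normalized_left_null[OF assms(3)] by blast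
    then show "\<forall>g' y' \<tau>. delays_ok \<tau> \<longrightarrow> globally_synchronizes g' y' c K a \<tau>"
      using QSC_imp_globally_synchronizes_to[OF assms \<open>QSC a\<close>]
      unfolding globally_synchronizes_def by blast
  qed
  then show ?thesis
    using QSC_imp_globally_synchronizes_to[OF assms] normalized_left_null_pos_iff[OF _ assms(3)]
    by blast
qed

end
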